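(* Let $(E,\langle\cdot,\cdot\rangle,\circ,a_E)$ be a metric algebroid over $M$. Then there exists a metric connection $\nabla$ on the anchored metric bundle $(E,\langle\cdot,\cdot\rangle,a_E)$ such that for all $e_1,e_2,e_3\in\Gamma(E)$, $$\langle e_1\circ e_2,e_3\rangle=\langle\nabla_{e_1}e_2,e_3\rangle-\langle\nabla_{e_2}e_1,e_3\rangle+\langle\nabla_{e_3}e_1,e_2\rangle.$$
   Context: $E\to M$ is a vector bundle with a pseudo-metric $\langle\cdot,\cdot\rangle$ (nondegenerate symmetric bilinear form) and a bundle map $a_E:E\to TM$. A metric connection is an $\mathbb{R}$-bilinear $\nabla:\Gamma(E)\times\Gamma(E)\to\Gamma(E)$ with $\nabla_{fe_1}e_2=f\nabla_{e_1}e_2$, $\nabla_{e_1}(fe_2)=a_E(e_1)(f)e_2+f\nabla_{e_1}e_2$ and $a_E(e_1)\langle e_2,e_3\rangle=\langle\nabla_{e_1}e_2,e_3\rangle+\langle e_2,\nabla_{e_1}e_3\rangle$. A metric algebroid $(E,\langle\cdot,\cdot\rangle,\circ,a_E)$ is such a bundle with an $\mathbb{R}$-bilinear bracket $\circ$ on $\Gamma(E)$ satisfying $a_E(e)\langle h_1,h_2\rangle=\langle e\circ h_1,h_2\rangle+\langle h_1,e\circ h_2\rangle$ and $e\circ e=\tfrac12\mathcal{D}\langle e,e\rangle$, where $\mathcal{D}:C^\infty(M)\to\Gamma(E)$ is defined by $\langle\mathcal{D}(f),e\rangle=a_E(e)(f)$. *)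

theory Defs
  imports Main "HOL.Real_Vector_Spaces"
begin

text \<open>Algebraic (Serre--Swan) model of a smooth vector bundle E over M:
  the ring 'r plays the role of C^\<infinity>(M) (a commutative real algebra),
  the type 'e plays the role of the space of sections Gamma(E), which is
  a finitely generated projective 'r-module with scalar action smult.\<close>

definition section_module :: "('r::{comm_ring_1,real_algebra_1} \<Rightarrow> 'e::ab_group_add \<Rightarrow> 'e) \<Rightarrow> bool" where
  "section_module smult \<longleftrightarrow>
     (\<forall>r x y. smult r (x + y) = smult r x + smult r y) \<and>
     (\<forall>r s x. smult (r + s) x = smult r x + smult s x) \<and>
     (\<forall>r s x. smult (r * s) x = smult r (smult s x)) \<and>
     (\<forall>x. smult 1 x = x)"

definition r_linear :: "('r::{comm_ring_1,real_algebra_1} \<Rightarrow> 'e::ab_group_add \<Rightarrow> 'e) \<Rightarrow> ('e \<Rightarrow> 'r) \<Rightarrow> bool" where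
  "r_linear smult \<phi> \<longleftrightarrow> (\<forall>x y. \<phi> (x + y) = \<phi> x + \<phi> y) \<and> (\<forall>r x. \<phi> (smult r x) = r * \<phi> x)"

text \<open>Finitely generated projective module (dual basis characterisation);
  by Serre--Swan this characterises section modules of vector bundles.\<close>
definition fg_projective :: "('r::{comm_ring_1,real_algebra_1} \<Rightarrow> 'e::ab_group_add \<Rightarrow> 'e) \<Rightarrow> bool" where
  "fg_projective smult \<longleftrightarrow>
     (\<exists>(n::nat) (s::nat \<Rightarrow> 'e) (\<phi>::nat \<Rightarrow> 'e \<Rightarrow> 'r).
        (\<forall>i<n. r_linear smult (\<phi> i)) \<and> (\<forall>e. e = (\<Sum>i<n. smult (\<phi> i e) (s i))))"

text \<open>Vector fields = derivations of C^\<infinity>(M) (real-linear, Leibniz).\<close>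
definition is_derivation :: "('r::{comm_ring_1,real_algebra_1} \<Rightarrow> 'r) \<Rightarrow> bool" where
  "is_derivation X \<longleftrightarrow>
     (\<forall>f g. X (f + g) = X f + X g) \<and>
     (\<forall>c f. X (of_real c * f) = of_real c * X f) \<and>
     (\<forall>f g. X (f * g) = X f * g + f * X g)"

text \<open>Anchored bundle with pseudo-metric: symmetric, C^\<infinity>-bilinear,
  nondegenerate pairing (musical map Gamma(E) -> Gamma(E*) bijective),
  and a bundle map a_E : E -> TM.\<close>
definition anchored_metric_bundle ::
  "('r::{comm_ring_1,real_algebra_1} \<Rightarrow> 'e::ab_group_add \<Rightarrow> 'e) \<Rightarrow> ('e \<Rightarrow> 'e \<Rightarrow> 'r) \<Rightarrow> ('e \<Rightarrow> 'r \<Rightarrow> 'r) \<Rightarrow> bool" where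
  "anchored_metric_bundle smult pair anchor \<longleftrightarrow>
     section_module smult \<and> fg_projective smult \<and>
     (\<forall>x y. pair x y = pair y x) \<and>
     (\<forall>x. r_linear smult (pair x)) \<and>
     (\<forall>\<phi>. r_linear smult \<phi> \<longrightarrow> (\<exists>!x. \<forall>y. pair x y = \<phi> y)) \<and>
     (\<forall>e1 e2. anchor (e1 + e2) = (\<lambda>f. anchor e1 f + anchor e2 f)) \<and>
     (\<forall>g e. anchor (smult g e) = (\<lambda>f. g * anchor e f)) \<and>
     (\<forall>e. is_derivation (anchor e))"

definition Dop :: "('e \<Rightarrow> 'e \<Rightarrow> 'r) \<Rightarrow> ('e \<Rightarrow> 'r \<Rightarrow> 'r) \<Rightarrow> 'r \<Rightarrow> 'e" where
  "Dop pair anchor f = (THE d. \<forall>e. pair d e = anchor e f)"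

definition metric_connection ::
  "('r::{comm_ring_1,real_algebra_1} \<Rightarrow> 'e::ab_group_add \<Rightarrow> 'e) \<Rightarrow> ('e \<Rightarrow> 'e \<Rightarrow> 'r) \<Rightarrow> ('e \<Rightarrow> 'r \<Rightarrow> 'r)
     \<Rightarrow> ('e \<Rightarrow> 'e \<Rightarrow> 'e) \<Rightarrow> bool" where
  "metric_connection smult pair anchor nabla \<longleftrightarrow>
     (\<forall>e1 e1' e2. nabla (e1 + e1') e2 = nabla e1 e2 + nabla e1' e2) \<and>
     (\<forall>e1 e2 e2'. nabla e1 (e2 + e2') = nabla e1 e2 + nabla e1 e2') \<and>
     (\<forall>c e1 e2. nabla (smult (of_real c) e1) e2 = smult (of_real c) (nabla e1 e2)) \<and>
     (\<forall>c e1 e2. nabla e1 (smult (of_real c) e2) = smult (of_real c) (nabla e1 e2)) \<and>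
     (\<forall>f e1 e2. nabla (smult f e1) e2 = smult f (nabla e1 e2)) \<and>
     (\<forall>f e1 e2. nabla e1 (smult f e2) = smult (anchor e1 f) e2 + smult f (nabla e1 e2)) \<and>
     (\<forall>e1 e2 e3. anchor e1 (pair e2 e3) = pair (nabla e1 e2) e3 + pair e2 (nabla e1 e3))"

definition metric_algebroid ::
  "('r::{comm_ring_1,real_algebra_1} \<Rightarrow> 'e::ab_group_add \<Rightarrow> 'e) \<Rightarrow> ('e \<Rightarrow> 'e \<Rightarrow> 'r)
     \<Rightarrow> ('e \<Rightarrow> 'e \<Rightarrow> 'e) \<Rightarrow> ('e \<Rightarrow> 'r \<Rightarrow> 'r) \<Rightarrow> bool" where
  "metric_algebroid smult pair circ anchor \<longleftrightarrow>
     anchored_metric_bundle smult pair anchor \<and>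
     (\<forall>e1 e1' e2. circ (e1 + e1') e2 = circ e1 e2 + circ e1' e2) \<and>
     (\<forall>e1 e2 e2'. circ e1 (e2 + e2') = circ e1 e2 + circ e1 e2') \<and>
     (\<forall>c e1 e2. circ (smult (of_real c) e1) e2 = smult (of_real c) (circ e1 e2)) \<and>
     (\<forall>c e1 e2. circ e1 (smult (of_real c) e2) = smult (of_real c) (circ e1 e2)) \<and>
     (\<forall>e h1 h2. anchor e (pair h1 h2) = pair (circ e h1) h2 + pair h1 (circ e h2)) \<and>
     (\<forall>e. circ e e = smult (of_real (1/2)) (Dop pair anchor (pair e e)))"

end

(*
  A connection exists on any finitely generated projective module: from a dual basis
  (s_i, phi_i) one gets G_x y = sum_i a(x)(phi_i y) s_i.  Averaging G with its adjoint
  with respect to the pairing gives a metric connection N.  For such N the defect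
    T(x,y,z) = <x o y, z> - (<N_x y, z> - <N_y x, z> + <N_z x, y>)
  is skew in (y,z), since both o and N are compatible with the pairing, and skew in (x,y),
  since polarising x o x = 1/2 D<x,x> gives <x o y + y o x, z> = a(z)<x,y>.  Being totally
  skew and C^oo-linear in z, T is a tensor.  Adding the section dual to 1/3 T to N keeps N
  metric, and since T is cyclic each of the three terms of the formula picks up 1/3 T,
  which absorbs the defect.
*)

theory Submission
  imports Defs
begin

lemma of_real_third_times_three: "of_real (1/3) * (3::'a::real_algebra_1) = 1"
proof -
  have "of_real (1/3) * (3::'a) = of_real (1/3 * 3)"
    by (simp only: of_real_mult of_real_numeral)
  then show ?thesis
    by simp
qed

locale anchored_metric_module =
  fixes smult :: "'r::{comm_ring_1,real_algebra_1} \<Rightarrow> 'e::ab_group_add \<Rightarrow> 'e"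
    and pair :: "'e \<Rightarrow> 'e \<Rightarrow> 'r"
    and anchor :: "'e \<Rightarrow> 'r \<Rightarrow> 'r"
  assumes metric_bundle: "anchored_metric_bundle smult pair anchor"
begin

sublocale module smult
  using metric_bundle unfolding anchored_metric_bundle_def section_module_def
  by unfold_locales auto

lemma pair_commute: "pair x y = pair y x"
  using metric_bundle unfolding anchored_metric_bundle_def by simp

lemma r_linear_pair: "r_linear smult (pair x)"
  using metric_bundle unfolding anchored_metric_bundle_def by simp

lemma r_linearI:
  "(\<And>x y. \<phi> (x + y) = \<phi> x + \<phi> y) \<Longrightarrow> (\<And>r x. \<phi> (smult r x) = r * \<phi> x) \<Longrightarrow>
    r_linear smult \<phi>"
  unfolding r_linear_def by blast

lemma r_linear_add: "r_linear smult \<phi> \<Longrightarrow> \<phi> (x + y) = \<phi> x + \<phi> y"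
  and r_linear_scale: "r_linear smult \<phi> \<Longrightarrow> \<phi> (smult r x) = r * \<phi> x"
  unfolding r_linear_def by blast+

lemma pair_add_right: "pair x (y + z) = pair x y + pair x z"
  and pair_scale_right: "pair x (smult r y) = r * pair x y"
  using r_linear_pair by (blast intro: r_linear_add r_linear_scale)+

lemma pair_add_left: "pair (y + z) x = pair y x + pair z x"
  and pair_scale_left: "pair (smult r y) x = r * pair y x"
  by (simp_all only: pair_commute[of _ x] pair_add_right pair_scale_right)

interpretation pair_left: additive "\<lambda>y. pair y x" for x
  by unfold_locales (fact pair_add_left)

interpretation pair_right: additive "pair x" for x
  by unfold_locales (fact pair_add_right)

lemmas pair_simps = pair_add_left pair_add_right pair_scale_left pair_scale_right
  pair_left.diff pair_right.diff pair_left.zero pair_right.zero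

lemma pair_nondegenerate: "r_linear smult \<phi> \<Longrightarrow> \<exists>!x. \<forall>y. pair x y = \<phi> y"
  using metric_bundle unfolding anchored_metric_bundle_def by simp

lemma pair_eqI: "(\<And>z. pair x z = pair y z) \<Longrightarrow> x = y"
  using pair_nondegenerate[OF r_linear_pair[of y]] by blast

definition sharp :: "('e \<Rightarrow> 'r) \<Rightarrow> 'e" where
  "sharp \<phi> = (THE x. \<forall>y. pair x y = \<phi> y)"

lemma pair_sharp: "r_linear smult \<phi> \<Longrightarrow> pair (sharp \<phi>) y = \<phi> y"
  unfolding sharp_def using theI'[OF pair_nondegenerate] by metis

lemma anchor_add_left: "anchor (x + y) f = anchor x f + anchor y f"
  and anchor_scale_left: "anchor (smult g x) f = g * anchor x f"
  and is_derivation_anchor: "is_derivation (anchor x)"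
  using metric_bundle unfolding anchored_metric_bundle_def by simp_all

lemma anchor_add_right: "anchor x (f + g) = anchor x f + anchor x g"
  and anchor_mult: "anchor x (f * g) = anchor x f * g + f * anchor x g"
  and anchor_of_real_mult: "anchor x (of_real c * f) = of_real c * anchor x f"
  using is_derivation_anchor unfolding is_derivation_def by blast+

lemma anchor_of_real: "anchor x (of_real c) = 0"
  using anchor_of_real_mult[of x c 1] anchor_mult[of x 1 1] by simp

lemma anchor_numeral: "anchor x (numeral k) = 0"
  using anchor_of_real[of x "numeral k"] by simp

interpretation anchor_left: additive "\<lambda>x. anchor x f" for f
  by unfold_locales (fact anchor_add_left)

interpretation anchor_right: additive "anchor x" for x
  by unfold_locales (fact anchor_add_right)

lemmas anchor_simps = anchor_add_left anchor_add_right anchor_scale_left anchor_mult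
  anchor_left.diff anchor_right.diff

lemma pair_Dop: "pair (Dop pair anchor f) y = anchor y f"
proof -
  have "r_linear smult (\<lambda>x. anchor x f)"
    by (rule r_linearI) (simp_all add: anchor_simps)
  then show ?thesis
    using pair_sharp unfolding sharp_def Dop_def by simp
qed

definition connection :: "('e \<Rightarrow> 'e \<Rightarrow> 'e) \<Rightarrow> bool" where
  "connection N \<longleftrightarrow>
     (\<forall>x x' y. N (x + x') y = N x y + N x' y) \<and>
     (\<forall>x y y'. N x (y + y') = N x y + N x y') \<and>
     (\<forall>f x y. N (smult f x) y = smult f (N x y)) \<and>
     (\<forall>f x y. N x (smult f y) = smult (anchor x f) y + smult f (N x y))"

definition metric_compatible :: "('e \<Rightarrow> 'e \<Rightarrow> 'e) \<Rightarrow> bool" where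
  "metric_compatible N \<longleftrightarrow> (\<forall>x y z. anchor x (pair y z) = pair (N x y) z + pair y (N x z))"

lemma connectionI:
  assumes "\<And>x x' y. N (x + x') y = N x y + N x' y"
    and "\<And>x y y'. N x (y + y') = N x y + N x y'"
    and "\<And>f x y. N (smult f x) y = smult f (N x y)"
    and "\<And>f x y. N x (smult f y) = smult (anchor x f) y + smult f (N x y)"
  shows "connection N"
  using assms unfolding connection_def by blast

lemma
  assumes "connection N"
  shows connection_add_left: "N (x + x') y = N x y + N x' y"
    and connection_add_right: "N x (y + y') = N x y + N x y'"
    and connection_scale_left: "N (smult f x) y = smult f (N x y)"
    and connection_Leibniz: "N x (smult f y) = smult (anchor x f) y + smult f (N x y)"
  using assms unfolding connection_def by blast+

lemma metric_compatibleD: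
  "metric_compatible N \<Longrightarrow> anchor x (pair y z) = pair (N x y) z + pair y (N x z)"
  unfolding metric_compatible_def by blast

lemma metric_connectionI:
  "connection N \<Longrightarrow> metric_compatible N \<Longrightarrow> metric_connection smult pair anchor N"
  unfolding metric_connection_def metric_compatible_def
  by (simp add: connection_add_left connection_add_right connection_scale_left
      connection_Leibniz anchor_of_real)

lemma connection_exists: "\<exists>G. connection G"
proof -
  obtain n and s :: "nat \<Rightarrow> 'e" and \<phi> :: "nat \<Rightarrow> 'e \<Rightarrow> 'r"
    where lin: "\<And>i. i < n \<Longrightarrow> r_linear smult (\<phi> i)"
      and dual_basis: "\<And>y. y = (\<Sum>i<n. smult (\<phi> i y) (s i))"
    using metric_bundle unfolding anchored_metric_bundle_def fg_projective_def by blast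
  define G where "G x y = (\<Sum>i<n. smult (anchor x (\<phi> i y)) (s i))" for x y
  have "G x (smult f y) = smult (anchor x f) y + smult f (G x y)" for f x y
  proof -
    have "G x (smult f y)
        = (\<Sum>i<n. smult (anchor x f) (smult (\<phi> i y) (s i))
                   + smult f (smult (anchor x (\<phi> i y)) (s i)))"
      unfolding G_def
      by (intro sum.cong) (simp_all add: lin r_linear_scale anchor_mult scale_left_distrib)
    also have "\<dots> = smult (anchor x f) (\<Sum>i<n. smult (\<phi> i y) (s i)) + smult f (G x y)"
      unfolding G_def by (simp add: sum.distrib scale_sum_right)
    finally show ?thesis
      using dual_basis by metis
  qed
  moreover have "G x (y + y') = G x y + G x y'" for x y y'
    unfolding G_def
    by (simp add: lin r_linear_add anchor_add_right scale_left_distrib sum.distrib[symmetric])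
  ultimately have "connection G"
    by (intro connectionI)
      (simp_all add: G_def anchor_add_left anchor_scale_left scale_left_distrib sum.distrib
        scale_sum_right)
  then show ?thesis by blast
qed

definition adjoint_connection :: "('e \<Rightarrow> 'e \<Rightarrow> 'e) \<Rightarrow> 'e \<Rightarrow> 'e \<Rightarrow> 'e" where
  "adjoint_connection G x y = sharp (\<lambda>z. anchor x (pair y z) - pair y (G x z))"

lemma pair_adjoint_connection:
  assumes "connection G"
  shows "pair (adjoint_connection G x y) z = anchor x (pair y z) - pair y (G x z)"
proof -
  have "r_linear smult (\<lambda>z. anchor x (pair y z) - pair y (G x z))"
    by (rule r_linearI) (simp_all add: assms connection_add_right connection_Leibniz
        pair_simps anchor_simps algebra_simps)
  then show ?thesis
    unfolding adjoint_connection_def by (rule pair_sharp)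
qed

lemma connection_adjoint_connection:
  assumes "connection G"
  shows "connection (adjoint_connection G)"
  by (intro connectionI; rule pair_eqI)
    (simp_all add: assms pair_adjoint_connection connection_add_left connection_scale_left
      pair_simps anchor_simps algebra_simps)

lemma connection_affine_combination:
  assumes "connection G" "connection H" "a + b = 1"
  shows "connection (\<lambda>x y. smult a (G x y) + smult b (H x y))"
proof (intro connectionI)
  fix f x y
  have "smult a (smult (anchor x f) y) + smult b (smult (anchor x f) y)
      = smult ((a + b) * anchor x f) y"
    by (simp add: algebra_simps)
  also have "\<dots> = smult (anchor x f) y"
    using assms(3) by simp
  finally show "smult a (G x (smult f y)) + smult b (H x (smult f y))
      = smult (anchor x f) y + smult f (smult a (G x y) + smult b (H x y))"
    using assms(1,2) by (simp add: connection_Leibniz algebra_simps)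
qed (simp_all add: assms connection_add_left connection_add_right connection_scale_left
    algebra_simps mult.commute)

lemma metric_connection_exists: "\<exists>N. connection N \<and> metric_compatible N"
proof -
  obtain G where G: "connection G"
    using connection_exists ..
  define h :: 'r where "h = of_real (1/2)"
  have "h + h = 1"
    unfolding h_def by (simp flip: of_real_add)
  define N where "N x y = smult h (G x y) + smult h (adjoint_connection G x y)" for x y
  have "connection N"
    unfolding N_def using G connection_adjoint_connection \<open>h + h = 1\<close>
    by (intro connection_affine_combination)
  moreover have "metric_compatible N"
    unfolding metric_compatible_def
  proof (intro allI)
    fix x y z
    have "pair (N x y) z + pair (N x z) y = (h + h) * anchor x (pair y z)"
      by (simp add: N_def G pair_adjoint_connection pair_simps pair_commute[of z y]
          pair_commute[of z "G x y"] pair_commute[of "G x z" y] algebra_simps)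
    then show "anchor x (pair y z) = pair (N x y) z + pair y (N x z)"
      using \<open>h + h = 1\<close> pair_commute[of y "N x z"] by simp
  qed
  ultimately show ?thesis by blast
qed

definition trilinear :: "('e \<Rightarrow> 'e \<Rightarrow> 'e \<Rightarrow> 'r) \<Rightarrow> bool" where
  "trilinear T \<longleftrightarrow>
     (\<forall>x y. r_linear smult (\<lambda>z. T z x y) \<and> r_linear smult (\<lambda>z. T x z y) \<and>
            r_linear smult (T x y))"

lemma r_linear_scale_const: "r_linear smult \<phi> \<Longrightarrow> r_linear smult (\<lambda>z. c * \<phi> z)"
  unfolding r_linear_def by (simp add: algebra_simps)

lemma trilinear_scale_const: "trilinear T \<Longrightarrow> trilinear (\<lambda>x y z. c * T x y z)"
  unfolding trilinear_def by (simp add: r_linear_scale_const)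

lemma trilinear_if_skew:
  assumes linear: "\<And>x y. r_linear smult (T x y)"
    and skew_left: "\<And>x y z. T y x z = - T x y z"
    and skew_right: "\<And>x y z. T x z y = - T x y z"
  shows "trilinear T"
proof -
  have "(\<lambda>z. T x z y) = (\<lambda>z. (- 1) * T x y z)" for x y
    by (simp add: skew_right[of x _ y])
  moreover have "(\<lambda>z. T z x y) = T x y" for x y
    by (rule ext) (simp add: skew_left[of x _ y] skew_right[of x y])
  ultimately show ?thesis
    unfolding trilinear_def using linear r_linear_scale_const by metis
qed

lemma connection_add_tensor:
  assumes "connection N" "trilinear T"
  shows "connection (\<lambda>x y. N x y + sharp (T x y))"
proof -
  have pair_sharp_T: "pair (sharp (T x y)) z = T x y z" for x y z
    using assms(2) unfolding trilinear_def by (simp add: pair_sharp)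
  have T_linear: "T (x + x') y z = T x y z + T x' y z" "T (smult f x) y z = f * T x y z"
    "T x (y + y') z = T x y z + T x y' z" "T x (smult f y) z = f * T x y z" for x x' y y' z f
    using assms(2) unfolding trilinear_def r_linear_def by blast+
  show ?thesis
    by (intro connectionI; rule pair_eqI)
      (simp_all add: pair_sharp_T T_linear assms(1) connection_add_left connection_add_right
        connection_scale_left connection_Leibniz pair_simps algebra_simps)
qed

lemma metric_compatible_add_skew_tensor:
  assumes "metric_compatible N" "trilinear T" "\<And>x y z. T x z y = - T x y z"
  shows "metric_compatible (\<lambda>x y. N x y + sharp (T x y))"
  unfolding metric_compatible_def
proof (intro allI)
  fix x y z
  have "r_linear smult (T x y)" "r_linear smult (T x z)"
    using assms(2) unfolding trilinear_def by blast+
  then show "anchor x (pair y z)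
      = pair (N x y + sharp (T x y)) z + pair y (N x z + sharp (T x z))"
    using metric_compatibleD[OF assms(1), of x y z] assms(3)[of x y z]
    by (simp add: pair_add_left pair_sharp pair_commute[of y "N x z + sharp (T x z)"]
        pair_commute[of y "N x z"])
qed

lemma pair_circ_add_swap:
  assumes "metric_algebroid smult pair circ anchor"
  shows "pair (circ x y) z + pair (circ y x) z = anchor z (pair x y)"
proof -
  have circ_add: "circ (x + x') y = circ x y + circ x' y" "circ x (y + y') = circ x y + circ x y'"
    and circ_diag: "circ x x = smult (of_real (1/2)) (Dop pair anchor (pair x x))" for x x' y y'
    using assms unfolding metric_algebroid_def by blast+
  define h :: 'r where "h = of_real (1/2)"
  have pair_circ_diag: "pair (circ x x) z = h * anchor z (pair x x)" for x
    by (simp add: circ_diag h_def pair_scale_left pair_Dop)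
  have "pair (circ (x + y) (x + y)) z
      = pair (circ x x) z + pair (circ y y) z + (pair (circ x y) z + pair (circ y x) z)"
    by (simp add: circ_add pair_add_left algebra_simps)
  moreover have "pair (circ (x + y) (x + y)) z
      = pair (circ x x) z + pair (circ y y) z + (h + h) * anchor z (pair x y)"
    by (simp add: pair_circ_diag pair_simps anchor_add_right anchor_mult anchor_numeral
        pair_commute[of y x] algebra_simps)
  moreover have "h + h = 1"
    unfolding h_def by (simp flip: of_real_add)
  ultimately show ?thesis
    by simp
qed

definition circ_defect :: "('e \<Rightarrow> 'e \<Rightarrow> 'e) \<Rightarrow> ('e \<Rightarrow> 'e \<Rightarrow> 'e) \<Rightarrow> 'e \<Rightarrow> 'e \<Rightarrow> 'e \<Rightarrow> 'r" where
  "circ_defect circ N x y z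
     = pair (circ x y) z - (pair (N x y) z - pair (N y x) z + pair (N z x) y)"

lemma r_linear_circ_defect:
  assumes "connection N"
  shows "r_linear smult (circ_defect circ N x y)"
  by (rule r_linearI) (simp_all add: circ_defect_def assms connection_add_left
      connection_scale_left pair_simps algebra_simps)

lemma circ_defect_skew_right:
  assumes "metric_algebroid smult pair circ anchor" "metric_compatible N"
  shows "circ_defect circ N x z y = - circ_defect circ N x y z"
proof -
  have "anchor x (pair y z) = pair (circ x y) z + pair y (circ x z)"
    using assms(1) unfolding metric_algebroid_def by blast
  then show ?thesis
    using metric_compatibleD[OF assms(2), of x y z]
    by (simp add: circ_defect_def pair_commute[of y] algebra_simps)
qed

lemma circ_defect_skew_left:
  assumes "metric_algebroid smult pair circ anchor" "metric_compatible N"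
  shows "circ_defect circ N y x z = - circ_defect circ N x y z"
  using pair_circ_add_swap[OF assms(1), of x y z] metric_compatibleD[OF assms(2), of z x y]
  by (simp add: circ_defect_def pair_commute[of x "N z y"] algebra_simps)

lemma trilinear_circ_defect:
  assumes "metric_algebroid smult pair circ anchor" "connection N" "metric_compatible N"
  shows "trilinear (circ_defect circ N)"
  using assms
  by (intro trilinear_if_skew r_linear_circ_defect circ_defect_skew_left circ_defect_skew_right)

lemma pair_circ_eq_corrected_connection:
  assumes "metric_algebroid smult pair circ anchor" "connection N" "metric_compatible N"
  defines "N' \<equiv> \<lambda>x y. N x y + sharp (\<lambda>z. of_real (1/3) * circ_defect circ N x y z)"
  shows "pair (circ x y) z = pair (N' x y) z - pair (N' y x) z + pair (N' z x) y"
proof -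
  let ?T = "circ_defect circ N"
  have pair_N': "pair (N' x y) z = pair (N x y) z + of_real (1/3) * ?T x y z" for x y z
    using r_linear_circ_defect[OF assms(2)]
    by (simp add: N'_def pair_add_left pair_sharp r_linear_scale_const)
  have skew_yx: "?T y x z = - ?T x y z" and skew_zx: "?T z x y = - ?T x z y"
    and skew_zy: "?T x z y = - ?T x y z"
    by (rule circ_defect_skew_left[OF assms(1,3)] circ_defect_skew_right[OF assms(1,3)])+
  have "pair (N' x y) z - pair (N' y x) z + pair (N' z x) y
      = pair (N x y) z - pair (N y x) z + pair (N z x) y + (of_real (1/3) * 3) * ?T x y z"
    by (simp add: pair_N' skew_yx skew_zx skew_zy algebra_simps)
  also have "\<dots> = pair (circ x y) z"
    by (simp add: of_real_third_times_three circ_defect_def)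
  finally show ?thesis ..
qed

end

theorem proposition3p2:
  fixes smult :: "'r::{comm_ring_1,real_algebra_1} \<Rightarrow> 'e::ab_group_add \<Rightarrow> 'e"
    and pair :: "'e \<Rightarrow> 'e \<Rightarrow> 'r"
    and circ :: "'e \<Rightarrow> 'e \<Rightarrow> 'e"
    and anchor :: "'e \<Rightarrow> 'r \<Rightarrow> 'r"
  assumes "metric_algebroid smult pair circ anchor"
  shows "\<exists>nabla. metric_connection smult pair anchor nabla \<and>
           (\<forall>e1 e2 e3. pair (circ e1 e2) e3
               = pair (nabla e1 e2) e3 - pair (nabla e2 e1) e3 + pair (nabla e3 e1) e2)"
proof -
  interpret anchored_metric_module smult pair anchor
    using assms unfolding metric_algebroid_def by unfold_locales blast
  obtain N where N: "connection N" "metric_compatible N"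
    using metric_connection_exists by blast
  define T where "T x y z = of_real (1/3) * circ_defect circ N x y z" for x y z
  have "trilinear T"
    unfolding T_def using assms N by (intro trilinear_scale_const trilinear_circ_defect)
  moreover have "T x z y = - T x y z" for x y z
    unfolding T_def using circ_defect_skew_right[OF assms N(2), of x y z] by simp
  ultimately have "metric_connection smult pair anchor (\<lambda>x y. N x y + sharp (T x y))"
    using N by (intro metric_connectionI connection_add_tensor metric_compatible_add_skew_tensor)
  moreover have "pair (circ x y) z = pair (N x y + sharp (T x y)) z
      - pair (N y x + sharp (T y x)) z + pair (N z x + sharp (T z x)) y" for x y z
    using pair_circ_eq_corrected_connection[OF assms N] unfolding T_def .
  ultimately show ?thesis
    by blast
qed

end
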